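(* Let $W=x_1^{a_1}+\dots+x_N^{a_N}$ with all $a_i\ge3$, and let $X$ be a correlator of type $X_{-1}$ (in the A- or B-model). Then there is a unique $j\in\{1,\dots,N\}$ such that $K_j=1$ and $\ell_j\ge2$, while $K_i=\ell_i=0$ for all $i\ne j$. Furthermore $X=\langle x_j,x_j,x_j^{a_j-2}\alpha,x_j^{a_j-2}\beta\rangle$ for some monomials $\alpha,\beta$ not involving $x_j$.
   Context: A genus-zero correlator (Saito–Givental B-model of $W^T$, or FJRW A-model of $(W,G_W)$ with insertions mapped by Krawitz's isomorphism $\Psi$) is of type $X_{-1}$ if it has at least four insertions and has the form $\langle x_N,\dots,x_N,\dots,x_1,\dots,x_1,\alpha,\beta\rangle$ with $x_i$ appearing $\ell_i\ge0$ times and $\alpha=\prod x_i^{m_i},\beta=\prod x_i^{n_i}$ monomials in the standard basis of $\mathrm{Jac}(W^T)$, and if, setting $b=E_W^{-1}(\ell+m+n+2\cdot\mathbf 1)$ and $K_i=\ell_i-b_i+1$, one has $K_i\in\mathbb Z$ for all $i$ and $\sum_iK_i=1$. For the Fermat sum $W=W^T$, the standard basis consists of $\prod x_i^{r_i}$ with $0\le r_i\le a_i-2$, and $b_i=(\ell_i+m_i+n_i+2)/a_i$. *)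

theory Defs
  imports Main "HOL.Rat"
begin

text \<open>Fermat potential W = x_1^{a_1} + ... + x_N^{a_N}, variables indexed by {1..N}.
  A genus-zero correlator with insertions x_N (l_N times), ..., x_1 (l_1 times), alpha, beta
  is encoded by the exponent data (l, m, n): alpha = prod x_i^{m_i}, beta = prod x_i^{n_i}.\<close>

definition fermat_std_basis :: "nat \<Rightarrow> (nat \<Rightarrow> nat) \<Rightarrow> (nat \<Rightarrow> nat) \<Rightarrow> bool" where
  "fermat_std_basis N a r \<longleftrightarrow> (\<forall>i\<in>{1..N}. r i \<le> a i - 2)"

text \<open>b_i = (l_i + m_i + n_i + 2)/a_i  (this is E_W^{-1}(l+m+n+2) for the Fermat sum).\<close>
definition fermat_b :: "(nat \<Rightarrow> nat) \<Rightarrow> (nat \<Rightarrow> nat) \<Rightarrow> (nat \<Rightarrow> nat) \<Rightarrow> (nat \<Rightarrow> nat) \<Rightarrow> nat \<Rightarrow> rat" where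
  "fermat_b a l m n i = of_nat (l i + m i + n i + 2) / of_nat (a i)"

definition fermat_K :: "(nat \<Rightarrow> nat) \<Rightarrow> (nat \<Rightarrow> nat) \<Rightarrow> (nat \<Rightarrow> nat) \<Rightarrow> (nat \<Rightarrow> nat) \<Rightarrow> nat \<Rightarrow> rat" where
  "fermat_K a l m n i = of_nat (l i) - fermat_b a l m n i + 1"

definition type_Xm1 :: "nat \<Rightarrow> (nat \<Rightarrow> nat) \<Rightarrow> (nat \<Rightarrow> nat) \<Rightarrow> (nat \<Rightarrow> nat) \<Rightarrow> (nat \<Rightarrow> nat) \<Rightarrow> bool" where
  "type_Xm1 N a l m n \<longleftrightarrow>
     fermat_std_basis N a m \<and> fermat_std_basis N a n \<and>
     (\<Sum>i=1..N. l i) + 2 \<ge> 4 \<and>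
     (\<forall>i\<in>{1..N}. fermat_K a l m n i \<in> \<int>) \<and>
     (\<Sum>i=1..N. fermat_K a l m n i) = 1"

end

theory Submission
  imports Defs
begin

text \<open>Write \<open>b\<^sub>i = l\<^sub>i + 1 - K\<^sub>i\<close>, so that \<open>b\<^sub>i a\<^sub>i = l\<^sub>i + m\<^sub>i + n\<^sub>i + 2 \<le> l\<^sub>i + 2a\<^sub>i - 2\<close>.
  This forces \<open>b\<^sub>i < l\<^sub>i + 2\<close>, so the integer \<open>K\<^sub>i\<close> is nonnegative; \<open>K\<^sub>i = 0\<close> forces
  \<open>l\<^sub>i = 0\<close>; and \<open>K\<^sub>i = 1\<close> with \<open>l\<^sub>i \<ge> 2\<close> forces \<open>(l\<^sub>i - 2)(a\<^sub>i - 1) = m\<^sub>i + n\<^sub>i + 4 - 2a\<^sub>i \<le> 0\<close>,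
  i.e. \<open>l\<^sub>i = 2\<close> and \<open>m\<^sub>i = n\<^sub>i = a\<^sub>i - 2\<close>. Since the \<open>K\<^sub>i\<close> sum to 1 and \<open>\<Sum> l\<^sub>i \<ge> 2\<close>, some
  \<open>l\<^sub>j \<ge> 1\<close> has \<open>K\<^sub>j \<ge> 1\<close>, so \<open>K\<^sub>j = 1\<close> and all other \<open>K\<^sub>i\<close>, hence all other \<open>l\<^sub>i\<close>, vanish.\<close>

lemma exponent_sum_less_mult:
  fixes a l m n :: nat
  assumes "2 \<le> a" "m \<le> a - 2" "n \<le> a - 2"
  shows "l + m + n + 2 < (l + 2) * a"
proof -
  obtain b where "a = b + 2" using assms(1) le_Suc_ex by (metis add.commute)
  then show ?thesis using assms(2,3) by (simp add: algebra_simps)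
qed

lemma exponent_sum_eq_Suc_mult_imp_zero:
  fixes a l m n :: nat
  assumes "2 \<le> a" "m \<le> a - 2" "n \<le> a - 2" "(l + 1) * a = l + m + n + 2"
  shows "l = 0"
proof (rule ccontr)
  assume "l \<noteq> 0"
  obtain b where a: "a = b + 2" using assms(1) le_Suc_ex by (metis add.commute)
  have "b \<le> l * b" using \<open>l \<noteq> 0\<close> by simp
  moreover have "(l + 1) * (b + 2) = l * b + 2 * l + b + 2" by (simp add: algebra_simps)
  moreover have "m \<le> b" "n \<le> b" using assms(2,3) unfolding a by simp_all
  ultimately show False using assms(4) \<open>l \<noteq> 0\<close> unfolding a by linarith
qed

lemma exponent_sum_eq_mult_imp_extremal:
  fixes a l m n :: nat
  assumes "2 \<le> a" "m \<le> a - 2" "n \<le> a - 2" "l * a = l + m + n + 2" "2 \<le> l"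
  shows "l = 2 \<and> m = a - 2 \<and> n = a - 2"
proof -
  obtain b where a: "a = b + 2" using assms(1) le_Suc_ex by (metis add.commute)
  obtain k where l: "l = k + 2" using assms(5) le_Suc_ex by (metis add.commute)
  have "k * b + k + 2 * b = m + n"
    using assms(4) unfolding a l by (simp add: algebra_simps)
  then show ?thesis using assms(2,3) unfolding a l by simp
qed

lemma fermat_K_eq_of_int_iff:
  assumes "0 < a i"
  shows "fermat_K a l m n i = of_int k
    \<longleftrightarrow> (int (l i) + 1 - k) * int (a i) = int (l i + m i + n i + 2)"
proof -
  have "fermat_K a l m n i = of_int k
      \<longleftrightarrow> of_nat (l i + m i + n i + 2) / of_nat (a i) = (of_int (int (l i) + 1 - k) :: rat)"
    unfolding fermat_K_def fermat_b_def by auto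
  also have "\<dots> \<longleftrightarrow> of_nat (l i + m i + n i + 2) = (of_int ((int (l i) + 1 - k) * int (a i)) :: rat)"
    using assms by (simp add: divide_eq_eq)
  also have "\<dots> \<longleftrightarrow> (int (l i) + 1 - k) * int (a i) = int (l i + m i + n i + 2)"
    by (metis of_int_eq_iff of_int_of_nat_eq)
  finally show ?thesis .
qed

context
  fixes a l m n :: "nat \<Rightarrow> nat" and i :: nat
  assumes a_ge: "2 \<le> a i" and m_le: "m i \<le> a i - 2" and n_le: "n i \<le> a i - 2"
begin

lemma fermat_K_nonneg:
  assumes "fermat_K a l m n i \<in> \<int>"
  shows "0 \<le> fermat_K a l m n i"
proof -
  obtain k where k: "fermat_K a l m n i = of_int k" using assms by (auto elim: Ints_cases)
  have eq: "(int (l i) + 1 - k) * int (a i) = int (l i + m i + n i + 2)"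
    using k fermat_K_eq_of_int_iff[of a i l m n k] a_ge by simp
  have "0 \<le> k"
  proof (rule ccontr)
    assume "\<not> 0 \<le> k"
    then have "(int (l i) + 2) * int (a i) \<le> (int (l i) + 1 - k) * int (a i)"
      by (intro mult_right_mono) auto
    moreover from exponent_sum_less_mult[OF a_ge m_le n_le]
    have "int (l i + m i + n i + 2) < int ((l i + 2) * a i)"
      by (simp only: of_nat_less_iff)
    moreover have "int ((l i + 2) * a i) = (int (l i) + 2) * int (a i)"
      by (simp add: algebra_simps)
    ultimately show False using eq by linarith
  qed
  then show ?thesis using k by simp
qed

lemma fermat_K_eq_0_imp_l_eq_0:
  assumes "fermat_K a l m n i = 0"
  shows "l i = 0"
proof -
  have "int ((l i + 1) * a i) = int (l i + m i + n i + 2)"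
    using assms fermat_K_eq_of_int_iff[of a i l m n 0] a_ge by (simp add: algebra_simps)
  then have "(l i + 1) * a i = l i + m i + n i + 2" by (simp only: of_nat_eq_iff)
  then show ?thesis using exponent_sum_eq_Suc_mult_imp_zero a_ge m_le n_le by blast
qed

lemma fermat_K_eq_1_imp_extremal:
  assumes "fermat_K a l m n i = 1" "2 \<le> l i"
  shows "l i = 2 \<and> m i = a i - 2 \<and> n i = a i - 2"
proof -
  have "int (l i * a i) = int (l i + m i + n i + 2)"
    using assms(1) fermat_K_eq_of_int_iff[of a i l m n 1] a_ge by (simp add: algebra_simps)
  then have "l i * a i = l i + m i + n i + 2" by (simp only: of_nat_eq_iff)
  then show ?thesis using exponent_sum_eq_mult_imp_extremal a_ge m_le n_le assms(2) by blast
qed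

end

lemma sum_nonneg_eq_bound_at_member:
  fixes f :: "'a \<Rightarrow> 'b::linordered_ab_group_add"
  assumes "finite A" "j \<in> A" "\<And>i. i \<in> A \<Longrightarrow> 0 \<le> f i" "s \<le> f j" "sum f A = s"
  shows "f j = s" "\<forall>i\<in>A - {j}. f i = 0"
proof -
  have split: "sum f A = f j + sum f (A - {j})"
    using assms(1,2) by (simp add: sum.remove)
  have "0 \<le> sum f (A - {j})" using assms(3) by (intro sum_nonneg) auto
  then have rest: "sum f (A - {j}) = 0" using split assms(4,5) by simp
  then show "f j = s" using split assms(5) by simp
  show "\<forall>i\<in>A - {j}. f i = 0"
    using rest assms(1,3) sum_nonneg_eq_0_iff[of "A - {j}" f] by auto
qed

theorem lemma4p6:
  fixes N :: nat and a l m n :: "nat \<Rightarrow> nat"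
  assumes "\<forall>i\<in>{1..N}. a i \<ge> 3"
    and "type_Xm1 N a l m n"
  shows "(\<exists>!j. j \<in> {1..N} \<and> fermat_K a l m n j = 1 \<and> l j \<ge> 2)
       \<and> (\<exists>j\<in>{1..N}. fermat_K a l m n j = 1 \<and> l j \<ge> 2
            \<and> (\<forall>i\<in>{1..N}. i \<noteq> j \<longrightarrow> fermat_K a l m n i = 0 \<and> l i = 0)
            \<and> l j = 2 \<and> m j = a j - 2 \<and> n j = a j - 2)"
proof -
  let ?K = "fermat_K a l m n"
  have a: "\<And>i. i \<in> {1..N} \<Longrightarrow> 2 \<le> a i" using assms(1) by force
  from assms(2) have m_le: "\<forall>i\<in>{1..N}. m i \<le> a i - 2"
    and n_le: "\<forall>i\<in>{1..N}. n i \<le> a i - 2"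
    and l_sum: "2 \<le> (\<Sum>i=1..N. l i)"
    and K_int: "\<forall>i\<in>{1..N}. ?K i \<in> \<int>"
    and K_sum: "(\<Sum>i=1..N. ?K i) = 1"
    unfolding type_Xm1_def fermat_std_basis_def by auto
  have K_nonneg: "0 \<le> ?K i" if "i \<in> {1..N}" for i
    using that a m_le n_le K_int by (intro fermat_K_nonneg) auto
  have l_zero: "l i = 0" if "i \<in> {1..N}" "?K i = 0" for i
    using that a m_le n_le by (intro fermat_K_eq_0_imp_l_eq_0) auto
  have "(\<Sum>i=1..N. l i) \<noteq> 0" using l_sum by linarith
  then obtain j where j: "j \<in> {1..N}" "l j \<noteq> 0"
    by (rule sum.not_neutral_contains_not_neutral)
  have "?K j \<noteq> 0" using l_zero[OF j(1)] j(2) by blast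
  then have Kj_ge: "1 \<le> ?K j"
    using j(1) K_int K_nonneg Ints_nonzero_abs_ge1[of "?K j"] by simp
  have Kj: "?K j = 1" and others: "\<forall>i\<in>{1..N} - {j}. ?K i = 0"
    using sum_nonneg_eq_bound_at_member[OF finite_atLeastAtMost j(1) K_nonneg Kj_ge K_sum]
    by auto
  have l_others: "\<forall>i\<in>{1..N} - {j}. l i = 0" using others l_zero by simp
  have "(\<Sum>i=1..N. l i) = l j" using j(1) l_others by (simp add: sum.remove)
  then have lj: "2 \<le> l j" using l_sum by simp
  have "l j = 2 \<and> m j = a j - 2 \<and> n j = a j - 2"
    using j(1) a m_le n_le Kj lj by (intro fermat_K_eq_1_imp_extremal) auto
  moreover have "\<exists>!j. j \<in> {1..N} \<and> ?K j = 1 \<and> l j \<ge> 2"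
    using j(1) Kj lj l_others by (intro ex1I[of _ j]) force+
  ultimately show ?thesis using j(1) Kj lj others l_others by blast
qed

end
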